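(* Let $G$ be a finite graph with no isolated vertices. If $G$ has $2N+1$ vertices and is almost Hamiltonian, then there is no nontrivial circuit injection $f:G_M\rightarrow B$ with $B$ a binary matroid. If $G$ has $2N$ vertices and is Hamiltonian, then there is no nontrivial circuit injection $f:G_M\rightarrow B$ with $B$ a binary matroid.
   Context: Graphs are undirected without loops or multiple edges. $G_M$ is the cycle matroid of $G$ (cells: edges; circuits: edge sets of cycles of $G$). A matroid is a pair $(S,\mathscr{C})$, $S\neq\emptyset$, $\mathscr{C}\subseteq 2^S$, satisfying: (I) $A,B\in\mathscr{C}$, $A\subseteq B$ implies $A=B$; (II) $A,B\in\mathscr{C}$, $a\in A\cap B$, $b\in (A\cup B)\setminus(A\cap B)$ implies there exists $D\in\mathscr{C}$ with $D\subseteq A\cup B$, $a\notin D$, $b\in D$. A matroid is binary if the symmetric difference of any two circuits is a union of pairwise disjoint circuits. A circuit injection $f:G_M\rightarrow B$ is a bijection from $E(G)$ onto the cells of $B$ sending each circuit of $G$ to a circuit of $B$; it is nontrivial if $B$ has a circuit not equal to the image of any circuit of $G$. $G$ is Hamiltonian if some circuit contains all its vertices. A graph with $n$ vertices is almost Hamiltonian if every set of $n-1$ of its vertices is contained in the vertex set of some circuit. *)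

theory Defs
  imports Main
begin

definition graph :: "'a set \<Rightarrow> 'a set set \<Rightarrow> bool" where
  "graph V E \<longleftrightarrow> finite V \<and> (\<forall>e\<in>E. \<exists>u v. u \<noteq> v \<and> u \<in> V \<and> v \<in> V \<and> e = {u, v})"

definition no_isolated_vertices :: "'a set \<Rightarrow> 'a set set \<Rightarrow> bool" where
  "no_isolated_vertices V E \<longleftrightarrow> (\<forall>v\<in>V. \<exists>e\<in>E. v \<in> e)"

definition cycle_walk :: "'a set set \<Rightarrow> 'a list \<Rightarrow> bool" where
  "cycle_walk E vs \<longleftrightarrow> distinct vs \<and> length vs \<ge> 3 \<and>
     (\<forall>i < length vs. {vs ! i, vs ! ((i + 1) mod length vs)} \<in> E)"

definition cycle_edges :: "'a list \<Rightarrow> 'a set set" where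
  "cycle_edges vs = {{vs ! i, vs ! ((i + 1) mod length vs)} | i. i < length vs}"

(* circuits of G = circuits of the cycle matroid G_M: edge sets of cycles of G *)
definition graph_circuits :: "'a set set \<Rightarrow> 'a set set set" where
  "graph_circuits E = {cycle_edges vs | vs. cycle_walk E vs}"

definition circuit_vertices :: "'a set set \<Rightarrow> 'a set" where
  "circuit_vertices C = \<Union>C"

definition hamiltonian :: "'a set \<Rightarrow> 'a set set \<Rightarrow> bool" where
  "hamiltonian V E \<longleftrightarrow> (\<exists>C\<in>graph_circuits E. V \<subseteq> circuit_vertices C)"

definition almost_hamiltonian :: "'a set \<Rightarrow> 'a set set \<Rightarrow> bool" where
  "almost_hamiltonian V E \<longleftrightarrow>
     (\<forall>W. W \<subseteq> V \<and> card W = card V - 1 \<longrightarrow> (\<exists>C\<in>graph_circuits E. W \<subseteq> circuit_vertices C))"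

definition matroid :: "'b set \<Rightarrow> 'b set set \<Rightarrow> bool" where
  "matroid S \<C> \<longleftrightarrow> S \<noteq> {} \<and> \<C> \<subseteq> Pow S \<and>
     (\<forall>A\<in>\<C>. \<forall>B\<in>\<C>. A \<subseteq> B \<longrightarrow> A = B) \<and>
     (\<forall>A\<in>\<C>. \<forall>B\<in>\<C>. \<forall>a\<in>A \<inter> B. \<forall>b\<in>(A \<union> B) - (A \<inter> B).
        \<exists>D\<in>\<C>. D \<subseteq> A \<union> B \<and> a \<notin> D \<and> b \<in> D)"

definition binary_matroid :: "'b set \<Rightarrow> 'b set set \<Rightarrow> bool" where
  "binary_matroid S \<C> \<longleftrightarrow> matroid S \<C> \<and>
     (\<forall>A\<in>\<C>. \<forall>B\<in>\<C>. \<exists>F\<subseteq>\<C>. pairwise disjnt F \<and> \<Union>F = (A - B) \<union> (B - A))"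

definition circuit_injection :: "'a set set \<Rightarrow> ('a set \<Rightarrow> 'b) \<Rightarrow> 'b set \<Rightarrow> 'b set set \<Rightarrow> bool" where
  "circuit_injection E f S \<C> \<longleftrightarrow> bij_betw f E S \<and> (\<forall>c\<in>graph_circuits E. f ` c \<in> \<C>)"

definition nontrivial_circuit_injection :: "'a set set \<Rightarrow> ('a set \<Rightarrow> 'b) \<Rightarrow> 'b set \<Rightarrow> 'b set set \<Rightarrow> bool" where
  "nontrivial_circuit_injection E f S \<C> \<longleftrightarrow> circuit_injection E f S \<C> \<and>
     (\<exists>D\<in>\<C>. \<forall>c\<in>graph_circuits E. D \<noteq> f ` c)"

end

theory Submission
  imports Defs "HOL-Library.Multiset"
begin

text \<open>
  Let \<open>D\<close> be a circuit of \<open>B\<close> that is not the image of a cycle, and \<open>X = f\<^sup>-\<^sup>1(D)\<close>.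
  If every vertex had even \<open>X\<close>-degree, \<open>X\<close> would contain a cycle \<open>c\<close>, and \<open>f c \<subseteq> D\<close>
  would force \<open>f c = D\<close>; so \<open>X\<close> has a vertex of odd degree.
  Take a cycle \<open>H\<close> through all vertices except possibly one vertex \<open>w\<close> of even \<open>X\<close>-degree
  (when \<open>|V|\<close> is odd such a \<open>w\<close> exists by the handshake lemma). Every edge of \<open>X\<close> off \<open>H\<close>
  is a chord of \<open>H\<close> or joins \<open>w\<close> to \<open>H\<close>; adding chord cycles, and cycles through pairs of
  edges at \<open>w\<close>, reduces \<open>X\<close> modulo the cycle space to a set \<open>Y \<subseteq> H\<close> which still has a
  vertex of odd degree, so \<open>{} \<noteq> Y \<noteq> H\<close>. But \<open>f Y\<close> is the symmetric difference of \<open>D\<close>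
  with images of cycles, hence in the binary matroid \<open>B\<close> a union of circuits, and a
  circuit inside \<open>f Y \<subset> f H\<close> contradicts the incomparability of circuits.
\<close>

section \<open>Symmetric differences and binary matroids\<close>

definition Sym_Diff :: "'b set multiset \<Rightarrow> 'b set" where
  "Sym_Diff M = {x. odd (size (filter_mset (\<lambda>C. x \<in> C) M))}"

lemma Sym_Diff_empty [simp]: "Sym_Diff {#} = {}"
  by (simp add: Sym_Diff_def)

lemma Sym_Diff_add_mset [simp]: "Sym_Diff (add_mset C M) = sym_diff C (Sym_Diff M)"
  by (auto simp: Sym_Diff_def)

lemma Sym_Diff_union: "Sym_Diff (M + N) = sym_diff (Sym_Diff M) (Sym_Diff N)"
  by (auto simp: Sym_Diff_def)

lemma Sym_Diff_subset_Union: "Sym_Diff M \<subseteq> \<Union>(set_mset M)"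
  by (induction M) auto

lemma finite_Sym_Diff: "\<forall>C\<in>#M. finite C \<Longrightarrow> finite (Sym_Diff M)"
  by (induction M) auto

lemma inj_on_image_sym_diff:
  "inj_on f E \<Longrightarrow> A \<subseteq> E \<Longrightarrow> B \<subseteq> E \<Longrightarrow> f ` sym_diff A B = sym_diff (f ` A) (f ` B)"
  unfolding inj_on_def by blast

lemma Sym_Diff_image_mset:
  assumes "inj_on f E" "\<forall>C\<in>#M. C \<subseteq> E"
  shows "Sym_Diff (image_mset ((`) f) M) = f ` Sym_Diff M"
  using assms(2)
proof (induction M)
  case (add C M)
  then have CE: "C \<subseteq> E" and ME: "\<forall>C\<in>#M. C \<subseteq> E"
    by simp_all
  then have "Sym_Diff M \<subseteq> E"
    using Sym_Diff_subset_Union[of M] by blast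
  then have "f ` Sym_Diff (add_mset C M) = sym_diff (f ` C) (f ` Sym_Diff M)"
    using inj_on_image_sym_diff[OF assms(1) CE] by simp
  then show ?case
    using add.IH[OF ME] by simp
qed simp

lemma Sym_Diff_mset_set_disjoint:
  "finite F \<Longrightarrow> pairwise disjnt F \<Longrightarrow> Sym_Diff (mset_set F) = \<Union>F"
proof (induction F rule: finite_induct)
  case (insert C F)
  then have "C \<inter> \<Union>F = {}"
    by (auto simp: pairwise_insert disjnt_def)
  with insert show ?case
    by (auto simp: pairwise_insert)
qed simp

lemma Sym_Diff_eq_Union:
  assumes "\<And>A B. {#A, B#} \<subseteq># M \<Longrightarrow> A \<inter> B = {}"
  shows "Sym_Diff M = \<Union>(set_mset M)"
  using assms
proof (induction M)
  case (add C M)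
  have "C \<inter> B = {}" if "B \<in># M" for B
    using add.prems[of C B] that by (simp add: insert_subset_eq_iff)
  moreover have "Sym_Diff M = \<Union>(set_mset M)"
    using add.prems by (intro add.IH) (meson multi_psub_of_add_self subset_mset.less_imp_le subset_mset.order_trans)
  ultimately show ?case by auto
qed simp

lemma binary_matroid_sym_diff:
  "binary_matroid S \<C> \<Longrightarrow> A \<in> \<C> \<Longrightarrow> B \<in> \<C> \<Longrightarrow>
    \<exists>F\<subseteq>\<C>. pairwise disjnt F \<and> \<Union>F = sym_diff A B"
  by (simp add: binary_matroid_def)

lemma matroid_circuit_subset_eq: "matroid S \<C> \<Longrightarrow> A \<in> \<C> \<Longrightarrow> B \<in> \<C> \<Longrightarrow> A \<subseteq> B \<Longrightarrow> A = B"
  by (simp add: matroid_def)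

lemma finite_matroid_circuits:
  assumes "matroid S \<C>" "finite S"
  shows "finite \<C>" "\<And>C. C \<in> \<C> \<Longrightarrow> finite C"
proof -
  have "\<C> \<subseteq> Pow S"
    using assms(1) by (simp add: matroid_def)
  with assms(2) show "finite \<C>" "\<And>C. C \<in> \<C> \<Longrightarrow> finite C"
    by (meson finite_Pow_iff finite_subset, meson PowD finite_subset subsetD)
qed

lemma binary_matroid_overlap_replacement:
  assumes bin: "binary_matroid S \<C>" and "finite S" "A \<in> \<C>" "B \<in> \<C>" "A \<inter> B \<noteq> {}"
  obtains F where "F \<subseteq> \<C>" "finite F" "Sym_Diff (mset_set F) = sym_diff A B"
    "(\<Sum>C\<in>#mset_set F. card C) < card A + card B"
proof -
  have "matroid S \<C>"
    using bin by (simp add: binary_matroid_def)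
  note fin = finite_matroid_circuits[OF this \<open>finite S\<close>]
  obtain F where F: "F \<subseteq> \<C>" "pairwise disjnt F" "\<Union>F = sym_diff A B"
    using binary_matroid_sym_diff[OF bin \<open>A \<in> \<C>\<close> \<open>B \<in> \<C>\<close>] by metis
  have "finite F"
    using F(1) fin(1) by (rule finite_subset)
  have "\<forall>C\<in>F. finite C"
    using F(1) fin(2) by blast
  then have "(\<Sum>C\<in>#mset_set F. card C) = card (\<Union>F)"
    using card_Union_disjoint[OF F(2)] by (simp add: sum_unfold_sum_mset)
  also have "\<dots> < card A + card B"
  proof -
    have "finite A" "finite B"
      using assms(3,4) fin(2) by auto
    then have "card (A - B) < card A" "card (B - A) \<le> card B"
      using assms(5) by (auto intro: psubset_card_mono card_mono)
    then show ?thesis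
      unfolding F(3) using card_Un_le[of "A - B" "B - A"] by linarith
  qed
  finally show ?thesis
    using that F(1) \<open>finite F\<close> Sym_Diff_mset_set_disjoint[OF \<open>finite F\<close> F(2)] F(3) by simp
qed

lemma binary_matroid_Sym_Diff:
  assumes bin: "binary_matroid S \<C>" and "finite S" and "set_mset M \<subseteq> \<C>"
  shows "\<exists>F\<subseteq>\<C>. \<Union>F = Sym_Diff M"
  using assms(3)
proof (induction "\<Sum>C\<in>#M. card C" arbitrary: M rule: less_induct)
  case less
  show ?case
  proof (cases "\<exists>A B. {#A, B#} \<subseteq># M \<and> A \<inter> B \<noteq> {}")
    case True
    then obtain A B where AB: "{#A, B#} \<subseteq># M" "A \<inter> B \<noteq> {}"
      by blast
    define M0 where "M0 = M - {#A, B#}"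
    have M: "M = M0 + {#A, B#}"
      using AB(1) unfolding M0_def by (rule subset_mset.diff_add[symmetric])
    have "A \<in> \<C>" "B \<in> \<C>"
      using set_mset_mono[OF AB(1)] less.prems by auto
    then obtain F where F: "F \<subseteq> \<C>" "finite F" "Sym_Diff (mset_set F) = sym_diff A B"
      "(\<Sum>C\<in>#mset_set F. card C) < card A + card B"
      using binary_matroid_overlap_replacement[OF bin \<open>finite S\<close> _ _ AB(2)] by blast
    define M' where "M' = M0 + mset_set F"
    have "(\<Sum>C\<in>#M'. card C) < (\<Sum>C\<in>#M. card C)" "set_mset M' \<subseteq> \<C>"
      using F less.prems by (auto simp: M M'_def)
    then have "\<exists>F\<subseteq>\<C>. \<Union>F = Sym_Diff M'"
      by (rule less.hyps)
    moreover have "Sym_Diff M' = Sym_Diff M"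
      unfolding M M'_def Sym_Diff_union F(3) by simp
    ultimately show ?thesis
      by simp
  next
    case False
    then have "Sym_Diff M = \<Union>(set_mset M)"
      by (intro Sym_Diff_eq_Union) blast
    with less.prems show ?thesis
      by blast
  qed
qed

lemma binary_matroid_Sym_Diff_within_circuit:
  assumes "binary_matroid S \<C>" "finite S" "set_mset M \<subseteq> \<C>"
    and "K \<in> \<C>" "Sym_Diff M \<subseteq> K" "Sym_Diff M \<noteq> {}"
  shows "Sym_Diff M = K"
proof -
  obtain F where "F \<subseteq> \<C>" "\<Union>F = Sym_Diff M"
    using binary_matroid_Sym_Diff[OF assms(1-3)] by blast
  with assms(6) obtain C where "C \<in> \<C>" "C \<subseteq> Sym_Diff M"
    by blast
  moreover have "matroid S \<C>"
    using assms(1) by (simp add: binary_matroid_def)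
  ultimately have "C = K"
    using matroid_circuit_subset_eq assms(4,5) by blast
  with \<open>C \<subseteq> Sym_Diff M\<close> assms(5) show ?thesis
    by blast
qed

section \<open>Degrees\<close>

definition degree :: "'a set set \<Rightarrow> 'a \<Rightarrow> nat" where
  "degree X v = card {e \<in> X. v \<in> e}"

lemma even_card_sym_diff:
  assumes "finite A" "finite B"
  shows "even (card (sym_diff A B)) \<longleftrightarrow> (even (card A) \<longleftrightarrow> even (card B))"
proof -
  have "card (A \<union> B) = card (sym_diff A B) + card (A \<inter> B)"
    using assms by (subst card_Un_disjoint[symmetric]) (auto intro: arg_cong[where f = card])
  then have "card A + card B = card (sym_diff A B) + 2 * card (A \<inter> B)"
    using card_Un_Int[OF assms] by simp
  then show ?thesis
    by presburger
qed

lemma even_degree_sym_diff: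
  assumes "finite X" "finite Y"
  shows "even (degree (sym_diff X Y) v) \<longleftrightarrow> (even (degree X v) \<longleftrightarrow> even (degree Y v))"
proof -
  have "{e \<in> sym_diff X Y. v \<in> e} = sym_diff {e \<in> X. v \<in> e} {e \<in> Y. v \<in> e}"
    by blast
  then show ?thesis
    using even_card_sym_diff[of "{e \<in> X. v \<in> e}" "{e \<in> Y. v \<in> e}"] assms
    by (simp add: degree_def)
qed

lemma even_degree_other_edge:
  assumes "even (degree X u)" "e \<in> X" "u \<in> e"
  obtains t where "t \<in> X" "u \<in> t" "t \<noteq> e"
proof (rule ccontr)
  assume "\<not> thesis"
  with that assms(2,3) have "{t \<in> X. u \<in> t} = {e}"
    by blast
  with assms(1) show False
    by (simp add: degree_def)
qed

lemma graph_edgeE: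
  assumes "graph V E" "e \<in> E"
  obtains a b where "a \<noteq> b" "a \<in> V" "b \<in> V" "e = {a, b}"
  using assms by (auto simp: graph_def)

lemma graph_edge_incident:
  assumes "graph V E" "e \<in> E" "u \<in> e"
  obtains y where "e = {u, y}" "y \<noteq> u" "y \<in> V"
proof -
  obtain a b where "a \<noteq> b" "a \<in> V" "b \<in> V" "e = {a, b}"
    using graph_edgeE[OF assms(1,2)] by blast
  with assms(3) that show ?thesis
    by (auto simp: insert_commute)
qed

lemma finite_graph_edges: "graph V E \<Longrightarrow> finite E"
  unfolding graph_def by (metis (no_types, lifting) PowI finite_Pow_iff finite_subset insert_subsetI empty_subsetI subsetI)

lemma handshake:
  assumes G: "graph V E" and "X \<subseteq> E"
  shows "(\<Sum>v\<in>V. degree X v) = 2 * card X"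
proof -
  have "finite V" "finite X"
    using G \<open>X \<subseteq> E\<close> finite_graph_edges[OF G] by (auto simp: graph_def intro: finite_subset)
  have two: "(\<Sum>v\<in>V. of_bool (v \<in> e)) = (2::nat)" if "e \<in> X" for e
  proof -
    obtain a b where "a \<noteq> b" "a \<in> V" "b \<in> V" "e = {a, b}"
      using G \<open>X \<subseteq> E\<close> \<open>e \<in> X\<close> by (auto elim: graph_edgeE)
    then have "V \<inter> {v. v \<in> e} = {a, b}" by auto
    with \<open>a \<noteq> b\<close> \<open>finite V\<close> show ?thesis by simp
  qed
  have "(\<Sum>v\<in>V. degree X v) = (\<Sum>v\<in>V. \<Sum>e\<in>X. of_bool (v \<in> e))"
    using \<open>finite X\<close> by (simp add: degree_def Collect_conj_eq Int_commute)
  also have "\<dots> = (\<Sum>e\<in>X. \<Sum>v\<in>V. of_bool (v \<in> e))"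
    by (rule sum.swap)
  also have "\<dots> = 2 * card X"
    using two by simp
  finally show ?thesis .
qed

lemma odd_card_even_degree_vertex:
  assumes "graph V E" "X \<subseteq> E" "odd (card V)"
  shows "\<exists>w\<in>V. even (degree X w)"
proof (rule ccontr)
  assume "\<not> ?thesis"
  then have "{v \<in> V. odd (degree X v)} = V" by blast
  moreover have "finite V" using assms(1) by (simp add: graph_def)
  ultimately show False
    using handshake[OF assms(1,2)] even_sum_iff[of V "degree X"] assms(3) by simp
qed

section \<open>Paths and cycles\<close>

definition edge_path :: "'a set set \<Rightarrow> 'a list \<Rightarrow> bool" where
  "edge_path X ps \<longleftrightarrow> distinct ps \<and> (\<forall>k. Suc k < length ps \<longrightarrow> {ps ! k, ps ! Suc k} \<in> X)"

lemma edge_path_mono: "edge_path X ps \<Longrightarrow> X \<subseteq> Y \<Longrightarrow> edge_path Y ps"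
  by (auto simp: edge_path_def)

lemma edge_path_take: "edge_path X ps \<Longrightarrow> edge_path X (take n ps)"
  by (simp add: edge_path_def distinct_take)

lemma edge_path_drop: "edge_path X ps \<Longrightarrow> edge_path X (drop n ps)"
  by (simp add: edge_path_def)

lemma edge_path_Cons:
  assumes "y \<notin> set ps" "edge_path X ps" "ps \<noteq> []" "{y, hd ps} \<in> X"
  shows "edge_path X (y # ps)"
  unfolding edge_path_def
proof (intro conjI allI impI)
  fix k assume "Suc k < length (y # ps)"
  with assms show "{(y # ps) ! k, (y # ps) ! Suc k} \<in> X"
    by (cases k) (auto simp: edge_path_def hd_conv_nth)
qed (use assms in \<open>simp add: edge_path_def\<close>)

lemma cycle_edges_nth: "Suc k < length vs \<Longrightarrow> {vs ! k, vs ! Suc k} \<in> cycle_edges vs"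
  unfolding cycle_edges_def by (intro CollectI exI[of _ k]) simp

lemma cycle_edges_last_hd: "vs \<noteq> [] \<Longrightarrow> {last vs, hd vs} \<in> cycle_edges vs"
  unfolding cycle_edges_def
  by (intro CollectI exI[of _ "length vs - 1"]) (simp add: last_conv_nth hd_conv_nth)

lemma edge_path_cycle_edges: "distinct vs \<Longrightarrow> edge_path (cycle_edges vs) vs"
  by (simp add: edge_path_def cycle_edges_nth)

lemma cycle_edges_subset: "cycle_walk E vs \<Longrightarrow> cycle_edges vs \<subseteq> E"
  by (auto simp: cycle_walk_def cycle_edges_def)

lemma finite_cycle_edges: "finite (cycle_edges vs)"
proof -
  have "cycle_edges vs = (\<lambda>i. {vs ! i, vs ! ((i + 1) mod length vs)}) ` {..<length vs}"
    by (auto simp: cycle_edges_def)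
  then show ?thesis by simp
qed

lemma Union_cycle_edges:
  assumes "vs \<noteq> []"
  shows "\<Union>(cycle_edges vs) = set vs"
proof
  show "\<Union>(cycle_edges vs) \<subseteq> set vs"
    using assms unfolding cycle_edges_def by auto
  show "set vs \<subseteq> \<Union>(cycle_edges vs)"
  proof
    fix x assume "x \<in> set vs"
    then obtain i where "i < length vs" "x = vs ! i"
      by (auto simp: in_set_conv_nth)
    then show "x \<in> \<Union>(cycle_edges vs)"
      unfolding cycle_edges_def by blast
  qed
qed

lemma closed_edge_path_cycle_walk:
  assumes "edge_path X vs" "3 \<le> length vs" "{last vs, hd vs} \<in> X" "X \<subseteq> E"
  shows "cycle_walk E vs \<and> cycle_edges vs \<subseteq> X"
proof -
  have "{vs ! i, vs ! ((i + 1) mod length vs)} \<in> X" if "i < length vs" for i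
  proof (cases "Suc i < length vs")
    case True
    then show ?thesis using assms(1) by (simp add: edge_path_def)
  next
    case False
    with that have "i + 1 = length vs" by linarith
    then have "i = length vs - 1" "(i + 1) mod length vs = 0" by simp_all
    moreover have "vs \<noteq> []" using assms(2) by auto
    ultimately show ?thesis using assms(3) by (simp add: last_conv_nth hd_conv_nth)
  qed
  with assms show ?thesis
    unfolding cycle_walk_def cycle_edges_def edge_path_def by auto
qed

lemma graph_circuitE:
  assumes "c \<in> graph_circuits E"
  obtains vs where "cycle_walk E vs" "c = cycle_edges vs"
  using assms by (auto simp: graph_circuits_def)

lemma graph_circuit_subset: "c \<in> graph_circuits E \<Longrightarrow> c \<subseteq> E"
  by (auto elim: graph_circuitE dest: cycle_edges_subset)

lemma cycle_edges_graph_circuit: "cycle_walk E vs \<Longrightarrow> cycle_edges vs \<in> graph_circuits E"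
  by (auto simp: graph_circuits_def)

lemma Suc_mod_eq_iff:
  fixes i k n :: nat
  assumes "i < n" "k < n"
  shows "(i + 1) mod n = k \<longleftrightarrow> i = (if k = 0 then n - 1 else k - 1)"
proof (cases "i + 1 = n")
  case True
  then have "(i + 1) mod n = 0" by simp
  with True assms(2) show ?thesis by auto
next
  case False
  with assms(1) have "i + 1 < n" by linarith
  then have "(i + 1) mod n = i + 1" by simp
  with assms show ?thesis by auto
qed

lemma even_degree_cycle_edges:
  assumes "cycle_walk E vs"
  shows "even (degree (cycle_edges vs) u)"
proof (cases "u \<in> set vs")
  case False
  have "vs \<noteq> []" using assms by (auto simp: cycle_walk_def)
  with False have no_edge: "{e \<in> cycle_edges vs. u \<in> e} = {}"
    using Union_cycle_edges[of vs] by blast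
  show ?thesis
    unfolding degree_def no_edge by simp
next
  case True
  define n where "n = length vs"
  have "distinct vs" "3 \<le> n"
    using assms by (auto simp: cycle_walk_def n_def)
  from True obtain k where k: "k < n" "vs ! k = u"
    by (auto simp: in_set_conv_nth n_def)
  define p where "p = (if k = 0 then n - 1 else k - 1)"
  define s where "s = (k + 1) mod n"
  have "p < n" "s < n" "(p + 1) mod n = k"
    using k \<open>3 \<le> n\<close> Suc_mod_eq_iff[of p n k] by (auto simp: p_def s_def)
  have index_eq: "vs ! i = vs ! j \<longleftrightarrow> i = j" if "i < n" "j < n" for i j
    using \<open>distinct vs\<close> that by (simp add: nth_eq_iff_index_eq n_def)
  have "{e \<in> cycle_edges vs. u \<in> e} = {{vs ! p, u}, {u, vs ! s}}"
  proof (intro set_eqI iffI)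
    fix e assume "e \<in> {e \<in> cycle_edges vs. u \<in> e}"
    then obtain i where "i < n" "e = {vs ! i, vs ! ((i + 1) mod n)}" "u \<in> e"
      by (auto simp: cycle_edges_def n_def)
    moreover have "(i + 1) mod n < n" using \<open>3 \<le> n\<close> by simp
    ultimately show "e \<in> {{vs ! p, u}, {u, vs ! s}}"
      using k index_eq Suc_mod_eq_iff[of i n k] by (auto simp: p_def s_def)
  next
    fix e assume "e \<in> {{vs ! p, u}, {u, vs ! s}}"
    then show "e \<in> {e \<in> cycle_edges vs. u \<in> e}"
      using k \<open>p < n\<close> \<open>(p + 1) mod n = k\<close> unfolding cycle_edges_def s_def n_def
      by (auto simp: insert_commute)
  qed
  moreover have "vs ! p \<noteq> vs ! s" "vs ! p \<noteq> u" "vs ! s \<noteq> u"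
    using k \<open>p < n\<close> \<open>s < n\<close> \<open>3 \<le> n\<close> index_eq
    by (auto simp: p_def s_def mod_if)
  ultimately show ?thesis
    by (simp add: degree_def doubleton_eq_iff)
qed

lemma even_degree_graph_circuit: "c \<in> graph_circuits E \<Longrightarrow> even (degree c u)"
  by (auto elim: graph_circuitE simp: even_degree_cycle_edges)

lemma even_degree_Sym_Diff_circuits:
  "set_mset Ms \<subseteq> graph_circuits E \<Longrightarrow> even (degree (Sym_Diff Ms) u)"
proof (induction Ms)
  case (add c Ms)
  have "finite c" "\<forall>C\<in>#Ms. finite C"
    using add.prems by (auto elim!: graph_circuitE simp: finite_cycle_edges)
  with add show ?case
    using even_degree_sym_diff[of c "Sym_Diff Ms"] even_degree_graph_circuit[of c E u]
    by (simp add: finite_Sym_Diff)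
qed (simp add: degree_def)

lemma longest_edge_path:
  assumes "finite V" "{a, b} \<in> X" "a \<noteq> b" "a \<in> V" "b \<in> V"
  obtains ps where "edge_path X ps" "set ps \<subseteq> V" "2 \<le> length ps"
    "\<And>qs. edge_path X qs \<Longrightarrow> set qs \<subseteq> V \<Longrightarrow> length qs \<le> length ps"
proof -
  define P where "P ps \<longleftrightarrow> edge_path X ps \<and> set ps \<subseteq> V" for ps
  have bound: "\<forall>ps. P ps \<longrightarrow> length ps < Suc (card V)"
  proof (intro allI impI)
    fix ps assume "P ps"
    then have "distinct ps" "set ps \<subseteq> V"
      by (simp_all add: P_def edge_path_def)
    then have "length ps = card (set ps)"
      by (simp add: distinct_card)
    also have "\<dots> \<le> card V"
      using card_mono[OF assms(1) \<open>set ps \<subseteq> V\<close>] .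
    finally show "length ps < Suc (card V)" by simp
  qed
  have "P [a, b]"
    using assms by (auto simp: P_def edge_path_def less_Suc_eq)
  define ps where "ps = arg_max length P"
  have "P ps"
    using arg_max_natI[OF \<open>P [a, b]\<close> bound] by (simp add: ps_def)
  moreover have longest: "length qs \<le> length ps" if "P qs" for qs
    using arg_max_nat_le[OF that bound] by (simp add: ps_def)
  moreover have "2 \<le> length ps"
    using longest[OF \<open>P [a, b]\<close>] by simp
  ultimately show ?thesis
    using that by (auto simp: P_def)
qed

lemma edge_path_back_edge_cycle:
  assumes "edge_path X ps" "2 \<le> m" "m < length ps" "{ps ! m, hd ps} \<in> X" "X \<subseteq> E"
  shows "cycle_walk E (take (Suc m) ps) \<and> cycle_edges (take (Suc m) ps) \<subseteq> X"
proof (rule closed_edge_path_cycle_walk)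
  show "edge_path X (take (Suc m) ps)"
    using assms(1) by (rule edge_path_take)
  show "3 \<le> length (take (Suc m) ps)"
    using assms(2,3) by simp
  have "last (take (Suc m) ps) = ps ! m"
    using assms(3) by (simp add: take_Suc_conv_app_nth)
  then show "{last (take (Suc m) ps), hd (take (Suc m) ps)} \<in> X"
    using assms(4) by simp
qed (rule assms(5))

lemma even_degree_contains_cycle:
  assumes G: "graph V E" and "X \<subseteq> E" "X \<noteq> {}" and even: "\<And>u. even (degree X u)"
  shows "\<exists>vs. cycle_walk E vs \<and> cycle_edges vs \<subseteq> X"
proof -
  have "finite V"
    using G by (simp add: graph_def)
  obtain e where "e \<in> X"
    using \<open>X \<noteq> {}\<close> by blast
  moreover from this \<open>X \<subseteq> E\<close> obtain a b where "a \<noteq> b" "a \<in> V" "b \<in> V" "e = {a, b}"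
    using graph_edgeE[OF G] by blast
  ultimately obtain ps where ps: "edge_path X ps" "set ps \<subseteq> V" "2 \<le> length ps"
    and longest: "\<And>qs. edge_path X qs \<Longrightarrow> set qs \<subseteq> V \<Longrightarrow> length qs \<le> length ps"
    using longest_edge_path[OF \<open>finite V\<close>] by blast
  then have "ps \<noteq> []"
    by auto
  with ps(1,3) have "{hd ps, ps ! 1} \<in> X"
    by (auto simp: edge_path_def hd_conv_nth)
  then obtain t where "t \<in> X" "hd ps \<in> t" "t \<noteq> {hd ps, ps ! 1}"
    using even_degree_other_edge[OF even] by blast
  then obtain y where y: "t = {hd ps, y}" "y \<noteq> hd ps" "y \<in> V" "y \<noteq> ps ! 1"
    using graph_edge_incident[OF G] \<open>X \<subseteq> E\<close> by blast
  have "y \<in> set ps"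
  proof (rule ccontr)
    assume "y \<notin> set ps"
    then have "edge_path X (y # ps)"
      using ps(1) \<open>ps \<noteq> []\<close> \<open>t \<in> X\<close> y(1) by (intro edge_path_Cons) (auto simp: insert_commute)
    then show False
      using longest[of "y # ps"] ps(2) y(3) by simp
  qed
  then obtain m where m: "m < length ps" "ps ! m = y"
    by (auto simp: in_set_conv_nth)
  have "m \<noteq> 0"
  proof
    assume "m = 0"
    with m y(2) \<open>ps \<noteq> []\<close> show False
      by (simp add: hd_conv_nth)
  qed
  moreover have "m \<noteq> 1"
    using m y(4) by auto
  ultimately have "2 \<le> m"
    by linarith
  with m \<open>t \<in> X\<close> y(1) show ?thesis
    using edge_path_back_edge_cycle[OF ps(1) _ _ _ \<open>X \<subseteq> E\<close>] by (metis insert_commute)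
qed

lemma two_positions:
  assumes "a \<in> set hs" "b \<in> set hs" "a \<noteq> b"
  obtains i j where "i < j" "j < length hs" "{a, b} = {hs ! i, hs ! j}"
proof -
  obtain i j where ij: "i < length hs" "j < length hs" "hs ! i = a" "hs ! j = b"
    using assms(1,2) by (auto simp: in_set_conv_nth)
  with assms(3) have "i \<noteq> j"
    by blast
  then have "i < j \<or> j < i"
    by linarith
  with ij that show ?thesis
    by (auto simp: insert_commute)
qed

lemma arc_of_cycle:
  assumes "cycle_walk E hs" "i < j" "j < length hs"
  defines "arc \<equiv> take (j - i + 1) (drop i hs)"
  shows "edge_path (cycle_edges hs) arc" "length arc = j - i + 1"
    "hd arc = hs ! i" "last arc = hs ! j" "set arc \<subseteq> set hs"
proof -
  have "distinct hs"
    using assms(1) by (simp add: cycle_walk_def)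
  then show "edge_path (cycle_edges hs) arc"
    unfolding arc_def by (intro edge_path_take edge_path_drop edge_path_cycle_edges)
  show "length arc = j - i + 1"
    using assms(2,3) by (simp add: arc_def)
  then have "arc \<noteq> []" by auto
  then show "hd arc = hs ! i" "last arc = hs ! j"
    using assms(2,3) by (simp_all add: arc_def hd_conv_nth last_conv_nth)
  show "set arc \<subseteq> set hs"
    unfolding arc_def by (meson set_drop_subset set_take_subset order_trans)
qed

lemma chord_circuit:
  assumes hs: "cycle_walk E hs" and "a \<in> set hs" "b \<in> set hs" "a \<noteq> b"
    and "{a, b} \<in> E" "{a, b} \<notin> cycle_edges hs"
  shows "\<exists>c\<in>graph_circuits E. {a, b} \<in> c \<and> c \<subseteq> insert {a, b} (cycle_edges hs)"
proof -
  obtain i j where ij: "i < j" "j < length hs" "{a, b} = {hs ! i, hs ! j}"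
    using two_positions[OF assms(2-4)] by blast
  define arc where "arc = take (j - i + 1) (drop i hs)"
  note arc = arc_of_cycle[OF hs ij(1,2), folded arc_def]
  have "j \<noteq> i + 1"
    using ij cycle_edges_nth[of i hs] assms(6) by auto
  have "cycle_walk E arc \<and> cycle_edges arc \<subseteq> insert {a, b} (cycle_edges hs)"
  proof (rule closed_edge_path_cycle_walk)
    show "edge_path (insert {a, b} (cycle_edges hs)) arc"
      using arc(1) by (rule edge_path_mono) blast
    show "3 \<le> length arc"
      using arc(2) ij(1) \<open>j \<noteq> i + 1\<close> by simp
    show "{last arc, hd arc} \<in> insert {a, b} (cycle_edges hs)"
      using arc(3,4) ij(3) by (simp add: insert_commute)
    show "insert {a, b} (cycle_edges hs) \<subseteq> E"
      using cycle_edges_subset[OF hs] assms(5) by simp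
  qed
  moreover have "arc \<noteq> []"
    using arc(2) by auto
  then have "{a, b} \<in> cycle_edges arc"
    using cycle_edges_last_hd[of arc] arc(3,4) ij(3) by (simp add: insert_commute)
  ultimately show ?thesis
    using cycle_edges_graph_circuit by blast
qed

lemma star_circuit:
  assumes hs: "cycle_walk E hs" and "w \<notin> set hs" "a \<in> set hs" "b \<in> set hs" "a \<noteq> b"
    and "{w, a} \<in> E" "{w, b} \<in> E"
  shows "\<exists>c\<in>graph_circuits E. {w, a} \<in> c \<and> c \<subseteq> {{w, a}, {w, b}} \<union> cycle_edges hs"
proof -
  obtain i j where ij: "i < j" "j < length hs" "{a, b} = {hs ! i, hs ! j}"
    using two_positions[OF assms(3-5)] by blast
  define arc where "arc = take (j - i + 1) (drop i hs)"
  note arc = arc_of_cycle[OF hs ij(1,2), folded arc_def]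
  let ?X = "{{w, a}, {w, b}} \<union> cycle_edges hs"
  have ends: "{w, hs ! i} \<in> ?X" "{w, hs ! j} \<in> ?X"
    using ij(3) by (auto simp: doubleton_eq_iff)
  have "arc \<noteq> []"
    using arc(2) by auto
  have "cycle_walk E (w # arc) \<and> cycle_edges (w # arc) \<subseteq> ?X"
  proof (rule closed_edge_path_cycle_walk)
    show "edge_path ?X (w # arc)"
    proof (rule edge_path_Cons)
      show "w \<notin> set arc" using arc(5) assms(2) by blast
      show "edge_path ?X arc" using arc(1) by (rule edge_path_mono) blast
    qed (use \<open>arc \<noteq> []\<close> arc(3) ends in simp_all)
    show "3 \<le> length (w # arc)"
      using arc(2) ij(1) by simp
    show "{last (w # arc), hd (w # arc)} \<in> ?X"
      using arc(4) ends(2) \<open>arc \<noteq> []\<close> by (simp add: insert_commute)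
    show "?X \<subseteq> E"
      using cycle_edges_subset[OF hs] assms(6,7) by simp
  qed
  moreover have "{w, hs ! i} \<in> cycle_edges (w # arc)"
    using cycle_edges_nth[of 0 "w # arc"] arc(3) \<open>arc \<noteq> []\<close> by (simp add: hd_conv_nth)
  moreover have "{w, hs ! j} \<in> cycle_edges (w # arc)"
    using cycle_edges_last_hd[of "w # arc"] arc(4) \<open>arc \<noteq> []\<close> by (simp add: insert_commute)
  moreover have "{w, a} = {w, hs ! i} \<or> {w, a} = {w, hs ! j}"
    using ij(3) by (auto simp: doubleton_eq_iff)
  ultimately show ?thesis
    using cycle_edges_graph_circuit by metis
qed

lemma even_vertex_circuit:
  assumes G: "graph V E" and hs: "cycle_walk E hs" and "X \<subseteq> E"
    and "u \<notin> set hs" "V - {u} \<subseteq> set hs" "even (degree X u)" and "e \<in> X" "u \<in> e"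
  shows "\<exists>c\<in>graph_circuits E. e \<in> c \<and> c \<subseteq> X \<union> cycle_edges hs"
proof -
  have "e \<in> E"
    using \<open>e \<in> X\<close> \<open>X \<subseteq> E\<close> by blast
  then obtain x where x: "e = {u, x}" "x \<noteq> u" "x \<in> V"
    using \<open>u \<in> e\<close> by (rule graph_edge_incident[OF G])
  obtain t where t: "t \<in> X" "u \<in> t" "t \<noteq> e"
    using even_degree_other_edge assms(6-8) by metis
  then have "t \<in> E"
    using \<open>X \<subseteq> E\<close> by blast
  then obtain y where y: "t = {u, y}" "y \<noteq> u" "y \<in> V"
    using t(2) by (rule graph_edge_incident[OF G])
  have "x \<in> set hs" "y \<in> set hs" "x \<noteq> y"
    using x y t(3) assms(5) by auto
  then obtain c where "c \<in> graph_circuits E" "e \<in> c" "c \<subseteq> {e, t} \<union> cycle_edges hs"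
    using star_circuit[OF hs \<open>u \<notin> set hs\<close> _ _ _
        \<open>e \<in> E\<close>[unfolded x(1)] \<open>t \<in> E\<close>[unfolded y(1)], folded x(1) y(1)]
    by blast
  with t(1) \<open>e \<in> X\<close> show ?thesis
    by blast
qed

section \<open>Reduction modulo a near-Hamiltonian cycle\<close>

definition near_hamiltonian_cycle :: "'a set \<Rightarrow> 'a set set \<Rightarrow> 'a set set \<Rightarrow> 'a list \<Rightarrow> bool" where
  "near_hamiltonian_cycle V E X hs \<longleftrightarrow>
     cycle_walk E hs \<and> (\<exists>w. V - set hs \<subseteq> {w}) \<and> (\<forall>v\<in>V - set hs. even (degree X v))"

lemma near_hamiltonian_cycle_circuit:
  assumes G: "graph V E" and "X \<subseteq> E" and nh: "near_hamiltonian_cycle V E X hs"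
    and "\<not> X \<subseteq> cycle_edges hs"
  shows "\<exists>c\<in>graph_circuits E. c \<subseteq> X \<union> cycle_edges hs \<and> \<not> c \<subseteq> cycle_edges hs"
proof -
  let ?H = "cycle_edges hs"
  obtain w where hs: "cycle_walk E hs" and w: "V - set hs \<subseteq> {w}"
    and even: "\<forall>v\<in>V - set hs. even (degree X v)"
    using nh by (auto simp: near_hamiltonian_cycle_def)
  obtain e where "e \<in> X" "e \<notin> ?H"
    using assms(4) by blast
  with \<open>X \<subseteq> E\<close> obtain a b where ab: "a \<noteq> b" "a \<in> V" "b \<in> V" "e = {a, b}"
    using graph_edgeE[OF G] by blast
  have "e \<in> E"
    using \<open>e \<in> X\<close> \<open>X \<subseteq> E\<close> by blast
  show ?thesis
  proof (cases "a \<in> set hs \<and> b \<in> set hs")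
    case True
    then obtain c where "c \<in> graph_circuits E" "e \<in> c" "c \<subseteq> insert e ?H"
      using chord_circuit[OF hs _ _ ab(1)] \<open>e \<in> E\<close> \<open>e \<notin> ?H\<close> unfolding ab(4) by blast
    with \<open>e \<in> X\<close> \<open>e \<notin> ?H\<close> show ?thesis
      by blast
  next
    case False
    with ab obtain u where "u \<in> e" "u \<in> V - set hs"
      by blast
    with w have "V - {u} \<subseteq> set hs"
      by blast
    with \<open>u \<in> e\<close> \<open>u \<in> V - set hs\<close> obtain c where "c \<in> graph_circuits E" "e \<in> c" "c \<subseteq> X \<union> ?H"
      using even_vertex_circuit[OF G hs \<open>X \<subseteq> E\<close> _ _ _ \<open>e \<in> X\<close>] even by blast
    with \<open>e \<notin> ?H\<close> show ?thesis
      by blast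
  qed
qed

lemma near_hamiltonian_cycle_sym_diff:
  assumes "near_hamiltonian_cycle V E X hs" "finite X" "c \<in> graph_circuits E"
  shows "near_hamiltonian_cycle V E (sym_diff X c) hs"
proof -
  have "finite c"
    using assms(3) by (auto elim: graph_circuitE simp: finite_cycle_edges)
  then show ?thesis
    using assms even_degree_sym_diff[OF assms(2)] even_degree_graph_circuit[OF assms(3)]
    by (simp add: near_hamiltonian_cycle_def)
qed

lemma near_hamiltonian_cycle_reduction:
  assumes G: "graph V E" and "X \<subseteq> E" "near_hamiltonian_cycle V E X hs"
  shows "\<exists>Ms. set_mset Ms \<subseteq> graph_circuits E \<and> sym_diff X (Sym_Diff Ms) \<subseteq> cycle_edges hs"
  using assms(2,3)
proof (induction "card (X - cycle_edges hs)" arbitrary: X rule: less_induct)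
  case less
  let ?H = "cycle_edges hs"
  show ?case
  proof (cases "X \<subseteq> ?H")
    case True
    then show ?thesis
      by (intro exI[of _ "{#}"]) simp
  next
    case False
    then obtain c where c: "c \<in> graph_circuits E" "c \<subseteq> X \<union> ?H" "\<not> c \<subseteq> ?H"
      using near_hamiltonian_cycle_circuit[OF G less.prems] by blast
    have "finite X"
      using less.prems(1) finite_graph_edges[OF G] by (rule finite_subset)
    define X' where "X' = sym_diff X c"
    have "X' \<subseteq> E"
      using less.prems(1) graph_circuit_subset[OF c(1)] by (auto simp: X'_def)
    moreover have "near_hamiltonian_cycle V E X' hs"
      unfolding X'_def using less.prems(2) \<open>finite X\<close> c(1) by (rule near_hamiltonian_cycle_sym_diff)
    moreover have "card (X' - ?H) < card (X - ?H)"
    proof (rule psubset_card_mono)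
      show "finite (X - ?H)" using \<open>finite X\<close> by simp
      show "X' - ?H \<subset> X - ?H" using c(2,3) by (auto simp: X'_def)
    qed
    ultimately obtain Ms where "set_mset Ms \<subseteq> graph_circuits E" "sym_diff X' (Sym_Diff Ms) \<subseteq> ?H"
      using less.hyps by blast
    with c(1) show ?thesis
      by (intro exI[of _ "add_mset c Ms"]) (auto simp: X'_def)
  qed
qed

section \<open>Circuit injections into binary matroids\<close>

lemma circuit_injection_image_circuit:
  "circuit_injection E f S \<C> \<Longrightarrow> c \<in> graph_circuits E \<Longrightarrow> f ` c \<in> \<C>"
  by (simp add: circuit_injection_def)

lemma circuit_injection_image_preimage:
  assumes "circuit_injection E f S \<C>" "matroid S \<C>" "D \<in> \<C>"
  shows "f ` (E \<inter> f -` D) = D"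
proof -
  have "D \<subseteq> f ` E"
    using assms by (auto simp: circuit_injection_def matroid_def bij_betw_def)
  then show ?thesis by blast
qed

lemma inj_on_image_sym_diff_Sym_Diff:
  assumes "inj_on f E" "X \<subseteq> E" "\<forall>c\<in>#Ms. c \<subseteq> E"
  shows "f ` sym_diff X (Sym_Diff Ms) = Sym_Diff (add_mset (f ` X) (image_mset ((`) f) Ms))"
proof -
  have "Sym_Diff Ms \<subseteq> E"
    using assms(3) Sym_Diff_subset_Union[of Ms] by blast
  then show ?thesis
    using inj_on_image_sym_diff[OF assms(1,2)] Sym_Diff_image_mset[OF assms(1,3)] by simp
qed

lemma circuit_image_of_even_preimage:
  assumes G: "graph V E" and M: "matroid S \<C>" and f: "circuit_injection E f S \<C>"
    and "D \<in> \<C>" "H \<in> graph_circuits E" and even: "\<And>u. even (degree (E \<inter> f -` D) u)"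
  shows "\<exists>c\<in>graph_circuits E. D = f ` c"
proof (cases "E \<inter> f -` D = {}")
  case True
  then have "D \<subseteq> f ` H"
    using circuit_injection_image_preimage[OF f M \<open>D \<in> \<C>\<close>] by simp
  then show ?thesis
    using matroid_circuit_subset_eq[OF M \<open>D \<in> \<C>\<close> circuit_injection_image_circuit[OF f]]
      \<open>H \<in> graph_circuits E\<close> by blast
next
  case False
  then obtain vs where "cycle_walk E vs" "cycle_edges vs \<subseteq> E \<inter> f -` D"
    using even_degree_contains_cycle[OF G _ _ even] by blast
  then have "cycle_edges vs \<in> graph_circuits E" "f ` cycle_edges vs \<subseteq> D"
    by (auto intro: cycle_edges_graph_circuit)
  then show ?thesis
    using matroid_circuit_subset_eq[OF M circuit_injection_image_circuit[OF f] \<open>D \<in> \<C>\<close>] by blast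
qed

lemma binary_circuit_image_of_near_hamiltonian_cycle:
  assumes G: "graph V E" and B: "binary_matroid S \<C>" and f: "circuit_injection E f S \<C>"
    and "D \<in> \<C>" and nh: "near_hamiltonian_cycle V E (E \<inter> f -` D) hs"
  shows "\<exists>c\<in>graph_circuits E. D = f ` c"
proof (rule ccontr)
  assume no_image: "\<not> ?thesis"
  let ?X = "E \<inter> f -` D" and ?H = "cycle_edges hs"
  have M: "matroid S \<C>"
    using B by (simp add: binary_matroid_def)
  have "inj_on f E" "finite S"
    using f finite_graph_edges[OF G] by (auto simp: circuit_injection_def bij_betw_def)
  have H: "?H \<in> graph_circuits E"
    using nh by (auto simp: near_hamiltonian_cycle_def intro: cycle_edges_graph_circuit)
  obtain u where odd_X: "odd (degree ?X u)"
    using circuit_image_of_even_preimage[OF G M f \<open>D \<in> \<C>\<close> H] no_image by blast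
  obtain Ms where Ms: "set_mset Ms \<subseteq> graph_circuits E" "sym_diff ?X (Sym_Diff Ms) \<subseteq> ?H"
    using near_hamiltonian_cycle_reduction[OF G _ nh] by blast
  define Y where "Y = sym_diff ?X (Sym_Diff Ms)"
  have "finite ?X"
    using finite_graph_edges[OF G] by simp
  have "finite (Sym_Diff Ms)"
    using Ms(1) by (intro finite_Sym_Diff) (auto elim!: graph_circuitE simp: finite_cycle_edges)
  with \<open>finite ?X\<close> have odd_Y: "odd (degree Y u)"
    using odd_X even_degree_Sym_Diff_circuits[OF Ms(1)] even_degree_sym_diff[of ?X "Sym_Diff Ms" u]
    by (simp add: Y_def)
  have "Y \<subseteq> ?H"
    using Ms(2) by (simp add: Y_def)
  have "Y \<noteq> {}"
    using odd_Y by (auto simp: degree_def)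
  define M where "M = add_mset D (image_mset ((`) f) Ms)"
  have "\<forall>c\<in>#Ms. c \<subseteq> E"
    using Ms(1) graph_circuit_subset by blast
  then have "f ` Y = Sym_Diff M"
    using inj_on_image_sym_diff_Sym_Diff[OF \<open>inj_on f E\<close>, of ?X Ms]
      circuit_injection_image_preimage[OF f M \<open>D \<in> \<C>\<close>]
    by (simp add: Y_def M_def)
  moreover have "Sym_Diff M = f ` ?H"
  proof (rule binary_matroid_Sym_Diff_within_circuit[OF B \<open>finite S\<close>])
    show "set_mset M \<subseteq> \<C>"
      using \<open>D \<in> \<C>\<close> Ms(1) circuit_injection_image_circuit[OF f] by (auto simp: M_def)
    show "f ` ?H \<in> \<C>"
      using circuit_injection_image_circuit[OF f H] .
    show "Sym_Diff M \<subseteq> f ` ?H" "Sym_Diff M \<noteq> {}"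
      using \<open>f ` Y = Sym_Diff M\<close> \<open>Y \<subseteq> ?H\<close> \<open>Y \<noteq> {}\<close> by auto
  qed
  ultimately have "Y = ?H"
    using inj_on_image_eq_iff[OF \<open>inj_on f E\<close>] \<open>Y \<subseteq> ?H\<close> graph_circuit_subset[OF H]
    by (metis subset_trans)
  then show False
    using odd_Y even_degree_graph_circuit[OF H] by simp
qed

lemma no_nontrivial_binary_circuit_injection:
  assumes G: "graph V E" and B: "binary_matroid S \<C>" and f: "nontrivial_circuit_injection E f S \<C>"
    and near: "\<And>X. X \<subseteq> E \<Longrightarrow> \<exists>hs. near_hamiltonian_cycle V E X hs"
  shows False
proof -
  obtain D where "D \<in> \<C>" and not_image: "\<forall>c\<in>graph_circuits E. D \<noteq> f ` c"
    and "circuit_injection E f S \<C>"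
    using f by (auto simp: nontrivial_circuit_injection_def)
  moreover obtain hs where "near_hamiltonian_cycle V E (E \<inter> f -` D) hs"
    using near by blast
  ultimately obtain c where "c \<in> graph_circuits E" "D = f ` c"
    using binary_circuit_image_of_near_hamiltonian_cycle[OF G B] by blast
  with not_image show False
    by blast
qed

lemma graph_circuit_covering:
  assumes "C \<in> graph_circuits E" "W \<subseteq> circuit_vertices C"
  obtains hs where "cycle_walk E hs" "W \<subseteq> set hs"
proof -
  obtain hs where "cycle_walk E hs" "C = cycle_edges hs"
    using assms(1) by (rule graph_circuitE)
  moreover from this have "hs \<noteq> []"
    by (auto simp: cycle_walk_def)
  ultimately show ?thesis
    using that assms(2) Union_cycle_edges[of hs] by (simp add: circuit_vertices_def)
qed

lemma hamiltonian_near_hamiltonian_cycle: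
  assumes "hamiltonian V E"
  shows "\<exists>hs. near_hamiltonian_cycle V E X hs"
proof -
  obtain hs where "cycle_walk E hs" "V \<subseteq> set hs"
    using assms graph_circuit_covering by (metis hamiltonian_def)
  then show ?thesis
    by (auto simp: near_hamiltonian_cycle_def)
qed

lemma almost_hamiltonian_near_hamiltonian_cycle:
  assumes "graph V E" "X \<subseteq> E" "odd (card V)" "almost_hamiltonian V E"
  shows "\<exists>hs. near_hamiltonian_cycle V E X hs"
proof -
  obtain w where w: "w \<in> V" "even (degree X w)"
    using odd_card_even_degree_vertex[OF assms(1-3)] by blast
  then have "card (V - {w}) = card V - 1"
    by simp
  then obtain hs where "cycle_walk E hs" "V - {w} \<subseteq> set hs"
    using assms(4) graph_circuit_covering unfolding almost_hamiltonian_def by (metis Diff_subset)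
  with w(2) show ?thesis
    unfolding near_hamiltonian_cycle_def by blast
qed

theorem lemma2p3:
  fixes V :: "'a set" and E :: "'a set set" and N :: nat
  assumes "graph V E" and "no_isolated_vertices V E"
  shows "(card V = 2 * N + 1 \<and> almost_hamiltonian V E \<longrightarrow>
           \<not> (\<exists>(S :: 'b set) \<C> (f :: 'a set \<Rightarrow> 'b).
                 binary_matroid S \<C> \<and> nontrivial_circuit_injection E f S \<C>)) \<and>
         (card V = 2 * N \<and> hamiltonian V E \<longrightarrow>
           \<not> (\<exists>(S :: 'b set) \<C> (f :: 'a set \<Rightarrow> 'b).
                 binary_matroid S \<C> \<and> nontrivial_circuit_injection E f S \<C>))"
proof (intro conjI impI notI)
  assume "card V = 2 * N + 1 \<and> almost_hamiltonian V E"
    and "\<exists>(S :: 'b set) \<C> (f :: 'a set \<Rightarrow> 'b). binary_matroid S \<C> \<and> nontrivial_circuit_injection E f S \<C>"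
  then show False
    using no_nontrivial_binary_circuit_injection[OF assms(1)]
      almost_hamiltonian_near_hamiltonian_cycle[OF assms(1)] by auto
next
  assume "card V = 2 * N \<and> hamiltonian V E"
    and "\<exists>(S :: 'b set) \<C> (f :: 'a set \<Rightarrow> 'b). binary_matroid S \<C> \<and> nontrivial_circuit_injection E f S \<C>"
  then show False
    using no_nontrivial_binary_circuit_injection[OF assms(1)]
      hamiltonian_near_hamiltonian_cycle by blast
qed

end
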